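(* Let $X$ and $Y$ be Banach spaces and $\kappa$ an infinite cardinal. Then $X\oplus_\infty Y$ is $\mathrm{ASQ}_{<\kappa}$ if and only if $X$ or $Y$ is $\mathrm{ASQ}_{<\kappa}$. Likewise, $X\oplus_\infty Y$ is $\mathrm{SQ}_{<\kappa}$ if and only if $X$ or $Y$ is $\mathrm{SQ}_{<\kappa}$.
   Context: $X\oplus_\infty Y$ is $X\times Y$ with norm $\|(x,y)\|=\max\{\|x\|,\|y\|\}$. A Banach space $Z$ is $\mathrm{ASQ}_{<\kappa}$ if for every set $A\subset S_Z$ with $|A|<\kappa$ and every $\varepsilon>0$ there exists $y\in S_Z$ with $\|x\pm y\|\le 1+\varepsilon$ for all $x\in A$; $Z$ is $\mathrm{SQ}_{<\kappa}$ if for every such $A$ there exists $y\in S_Z$ with $\|x\pm y\|\le 1$ for all $x\in A$. *)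

theory Defs
  imports "HOL-Analysis.Analysis"
begin

text \<open>The unit sphere is the set of vectors of N-norm 1. Cardinals are
represented as in BNF_Cardinal_Order_Relation: kappa is a cardinal order relation,
and |A| < kappa is card_of A strictly less than kappa.\<close>

definition ASQ_lt_wrt :: "('v::real_vector \<Rightarrow> real) \<Rightarrow> 'c rel \<Rightarrow> bool" where
  "ASQ_lt_wrt N \<kappa> \<longleftrightarrow>
     (\<forall>A. A \<subseteq> {x. N x = 1} \<and> (card_of A, \<kappa>) \<in> ordLess \<longrightarrow>
        (\<forall>\<epsilon>>0. \<exists>y. N y = 1 \<and> (\<forall>x\<in>A. N (x + y) \<le> 1 + \<epsilon> \<and> N (x - y) \<le> 1 + \<epsilon>)))"

definition SQ_lt_wrt :: "('v::real_vector \<Rightarrow> real) \<Rightarrow> 'c rel \<Rightarrow> bool" where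
  "SQ_lt_wrt N \<kappa> \<longleftrightarrow>
     (\<forall>A. A \<subseteq> {x. N x = 1} \<and> (card_of A, \<kappa>) \<in> ordLess \<longrightarrow>
        (\<exists>y. N y = 1 \<and> (\<forall>x\<in>A. N (x + y) \<le> 1 \<and> N (x - y) \<le> 1)))"

abbreviation ASQ_lt :: "'c rel \<Rightarrow> 'v::real_normed_vector itself \<Rightarrow> bool" where
  "ASQ_lt \<kappa> _ \<equiv> ASQ_lt_wrt (norm :: 'v \<Rightarrow> real) \<kappa>"

abbreviation SQ_lt :: "'c rel \<Rightarrow> 'v::real_normed_vector itself \<Rightarrow> bool" where
  "SQ_lt \<kappa> _ \<equiv> SQ_lt_wrt (norm :: 'v \<Rightarrow> real) \<kappa>"

definition linf_norm :: "('a::real_normed_vector \<times> 'b::real_normed_vector) \<Rightarrow> real" where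
  "linf_norm z = max (norm (fst z)) (norm (snd z))"

end

theory Submission
  imports Defs
begin

text \<open>ASQ and SQ are the cases \<open>\<epsilon> > 0\<close> and \<open>\<epsilon> = 0\<close> of one \<open>\<epsilon>\<close>-tolerant property.
  If \<open>y \<in> S\<^sub>X\<close> is a witness for the normalised nonzero first components of \<open>A\<close>, then \<open>(y, 0)\<close>
  is a witness for \<open>A\<close> in \<open>X \<oplus>\<^sub>\<infinity> Y\<close>: first components lie in the unit ball, and convexity
  extends the estimate \<open>\<parallel>u \<plusminus> y\<parallel> \<le> 1 + \<epsilon>\<close> from unit vectors \<open>u\<close> to the ball.
  Conversely, if \<open>A\<^sub>1 \<subseteq> S\<^sub>X\<close> and \<open>A\<^sub>2 \<subseteq> S\<^sub>Y\<close> admit no witness, then \<open>A\<^sub>1 \<times> {0} \<union> {0} \<times> A\<^sub>2\<close>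
  still has fewer than \<open>\<kappa>\<close> elements since \<open>\<kappa>\<close> is infinite, and every unit vector \<open>(y\<^sub>1, y\<^sub>2)\<close>
  has a component of norm one, which \<open>A\<^sub>1\<close> resp. \<open>A\<^sub>2\<close> defeats.\<close>

definition SQ_lt_tol_wrt :: "('v::real_vector \<Rightarrow> real) \<Rightarrow> 'c rel \<Rightarrow> real \<Rightarrow> bool" where
  "SQ_lt_tol_wrt N \<kappa> \<epsilon> \<longleftrightarrow>
     (\<forall>A. A \<subseteq> {x. N x = 1} \<and> (card_of A, \<kappa>) \<in> ordLess \<longrightarrow>
        (\<exists>y. N y = 1 \<and> (\<forall>x\<in>A. N (x + y) \<le> 1 + \<epsilon> \<and> N (x - y) \<le> 1 + \<epsilon>)))"

lemma ASQ_lt_wrt_iff_tol: "ASQ_lt_wrt N \<kappa> \<longleftrightarrow> (\<forall>\<epsilon>>0. SQ_lt_tol_wrt N \<kappa> \<epsilon>)"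
  unfolding ASQ_lt_wrt_def SQ_lt_tol_wrt_def by blast

lemma SQ_lt_wrt_iff_tol: "SQ_lt_wrt N \<kappa> \<longleftrightarrow> SQ_lt_tol_wrt N \<kappa> 0"
  unfolding SQ_lt_wrt_def SQ_lt_tol_wrt_def by simp

lemma SQ_lt_tol_wrt_mono:
  "SQ_lt_tol_wrt N \<kappa> \<epsilon> \<Longrightarrow> \<epsilon> \<le> \<delta> \<Longrightarrow> SQ_lt_tol_wrt N \<kappa> \<delta>"
  unfolding SQ_lt_tol_wrt_def by (meson add_left_mono order_trans)

lemma card_of_image_ordLess:
  "(card_of A, \<kappa>) \<in> ordLess \<Longrightarrow> (card_of (f ` A), \<kappa>) \<in> ordLess"
  using card_of_image ordLeq_ordLess_trans by blast

lemma norm_scaleR_add_le: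
  fixes u y :: "'a::real_normed_vector"
  assumes "norm (u + y) \<le> c" "norm y \<le> 1" "1 \<le> c" "0 \<le> t" "t \<le> 1"
  shows "norm (t *\<^sub>R u + y) \<le> c"
proof -
  have "t *\<^sub>R u + y = t *\<^sub>R (u + y) + (1 - t) *\<^sub>R y"
    by (simp add: algebra_simps)
  then have "norm (t *\<^sub>R u + y) \<le> t * norm (u + y) + (1 - t) * norm y"
    using assms(4,5) by (metis abs_of_nonneg diff_ge_0_iff_ge norm_scaleR norm_triangle_ineq)
  also have "\<dots> \<le> t * c + (1 - t) * 1"
    using assms by (intro add_mono mult_left_mono) auto
  also have "\<dots> \<le> c"
  proof -
    have "0 \<le> (1 - t) * (c - 1)"
      using assms(3,5) by simp
    then show ?thesis
      by (simp add: algebra_simps)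
  qed
  finally show ?thesis .
qed

lemma norm_add_diff_le_of_sgn:
  fixes a y :: "'a::real_normed_vector"
  assumes "norm a \<le> 1" "norm y = 1" "0 \<le> \<epsilon>"
    and sgn_le: "a \<noteq> 0 \<Longrightarrow> norm (sgn a + y) \<le> 1 + \<epsilon> \<and> norm (sgn a - y) \<le> 1 + \<epsilon>"
  shows "norm (a + y) \<le> 1 + \<epsilon> \<and> norm (a - y) \<le> 1 + \<epsilon>"
proof (cases "a = 0")
  case True
  then show ?thesis using assms by simp
next
  case False
  have a: "a = norm a *\<^sub>R sgn a"
    by (simp add: sgn_div_norm False)
  have "norm (norm a *\<^sub>R sgn a + z) \<le> 1 + \<epsilon>" if "z = y \<or> z = - y" for z
    by (rule norm_scaleR_add_le) (use that sgn_le[OF False] assms in auto)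
  then show ?thesis
    using a by (metis diff_conv_add_uminus)
qed

lemma SQ_lt_tol_linf_fst:
  assumes sq: "SQ_lt_tol_wrt (norm :: 'a::real_normed_vector \<Rightarrow> real) \<kappa> \<epsilon>" and "0 \<le> \<epsilon>"
  shows "SQ_lt_tol_wrt (linf_norm :: 'a \<times> 'b::real_normed_vector \<Rightarrow> real) \<kappa> \<epsilon>"
  unfolding SQ_lt_tol_wrt_def
proof (intro allI impI)
  fix A :: "('a \<times> 'b) set"
  assume A: "A \<subseteq> {x. linf_norm x = 1} \<and> (card_of A, \<kappa>) \<in> ordLess"
  define B where "B = sgn ` (fst ` A - {0})"
  have "B \<subseteq> {u. norm u = 1}"
    by (auto simp: B_def norm_sgn)
  moreover have "(card_of B, \<kappa>) \<in> ordLess"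
    unfolding B_def using A card_of_mono1[of "fst ` A - {0}" "fst ` A"]
    by (blast intro: card_of_image_ordLess ordLeq_ordLess_trans)
  ultimately obtain y where y: "norm y = 1"
      "\<forall>u\<in>B. norm (u + y) \<le> 1 + \<epsilon> \<and> norm (u - y) \<le> 1 + \<epsilon>"
    using sq unfolding SQ_lt_tol_wrt_def by blast
  show "\<exists>z. linf_norm z = 1 \<and> (\<forall>x\<in>A. linf_norm (x + z) \<le> 1 + \<epsilon> \<and> linf_norm (x - z) \<le> 1 + \<epsilon>)"
  proof (intro exI[of _ "(y, 0)"] conjI ballI)
    show "linf_norm (y, 0::'b) = 1"
      using y by (simp add: linf_norm_def)
    fix x
    assume x: "x \<in> A"
    then have x_norm: "max (norm (fst x)) (norm (snd x)) = 1"
      using A by (auto simp: linf_norm_def)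
    have "norm (fst x + y) \<le> 1 + \<epsilon> \<and> norm (fst x - y) \<le> 1 + \<epsilon>"
    proof (rule norm_add_diff_le_of_sgn)
      assume "fst x \<noteq> 0"
      with x have "sgn (fst x) \<in> B"
        by (auto simp: B_def)
      with y show "norm (sgn (fst x) + y) \<le> 1 + \<epsilon> \<and> norm (sgn (fst x) - y) \<le> 1 + \<epsilon>"
        by blast
    qed (use x_norm y \<open>0 \<le> \<epsilon>\<close> in auto)
    moreover have "norm (snd x) \<le> 1 + \<epsilon>"
      using x_norm \<open>0 \<le> \<epsilon>\<close> by linarith
    ultimately show "linf_norm (x + (y, 0)) \<le> 1 + \<epsilon>" "linf_norm (x - (y, 0)) \<le> 1 + \<epsilon>"
      by (auto simp: linf_norm_def)
  qed
qed

lemma linf_norm_swap: "linf_norm (prod.swap z) = linf_norm z"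
  by (simp add: linf_norm_def max.commute)

lemma SQ_lt_tol_linf_swap:
  assumes "SQ_lt_tol_wrt (linf_norm :: 'a::real_normed_vector \<times> 'b::real_normed_vector \<Rightarrow> real) \<kappa> \<epsilon>"
  shows "SQ_lt_tol_wrt (linf_norm :: 'b \<times> 'a \<Rightarrow> real) \<kappa> \<epsilon>"
  unfolding SQ_lt_tol_wrt_def
proof (intro allI impI)
  fix A :: "('b \<times> 'a) set"
  assume A: "A \<subseteq> {x. linf_norm x = 1} \<and> (card_of A, \<kappa>) \<in> ordLess"
  then have swap_A: "prod.swap ` A \<subseteq> {x. linf_norm x = 1} \<and> (card_of (prod.swap ` A), \<kappa>) \<in> ordLess"
    by (intro conjI image_subsetI card_of_image_ordLess) (simp_all add: linf_norm_swap subset_eq)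
  obtain y :: "'a \<times> 'b" where y: "linf_norm y = 1"
      "\<forall>x\<in>A. linf_norm (prod.swap x + y) \<le> 1 + \<epsilon> \<and> linf_norm (prod.swap x - y) \<le> 1 + \<epsilon>"
    using assms[unfolded SQ_lt_tol_wrt_def, rule_format, OF swap_A] by auto
  have "x + prod.swap y = prod.swap (prod.swap x + y)" "x - prod.swap y = prod.swap (prod.swap x - y)"
    for x :: "'b \<times> 'a"
    by (simp_all add: prod_eq_iff)
  with y show "\<exists>z. linf_norm z = 1 \<and> (\<forall>x\<in>A. linf_norm (x + z) \<le> 1 + \<epsilon> \<and> linf_norm (x - z) \<le> 1 + \<epsilon>)"
    by (intro exI[of _ "prod.swap y"]) (simp add: linf_norm_swap)
qed

lemma SQ_lt_tol_linf_snd: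
  assumes "SQ_lt_tol_wrt (norm :: 'b::real_normed_vector \<Rightarrow> real) \<kappa> \<epsilon>" and "0 \<le> \<epsilon>"
  shows "SQ_lt_tol_wrt (linf_norm :: 'a::real_normed_vector \<times> 'b \<Rightarrow> real) \<kappa> \<epsilon>"
  by (rule SQ_lt_tol_linf_swap[OF SQ_lt_tol_linf_fst[OF assms]])

lemma not_SQ_lt_tol_linf:
  fixes \<kappa> :: "'c rel"
  assumes \<kappa>: "Card_order \<kappa>" "\<not> finite (Field \<kappa>)"
    and not_X: "\<not> SQ_lt_tol_wrt (norm :: 'a::real_normed_vector \<Rightarrow> real) \<kappa> \<epsilon>"
    and not_Y: "\<not> SQ_lt_tol_wrt (norm :: 'b::real_normed_vector \<Rightarrow> real) \<kappa> \<epsilon>"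
  shows "\<not> SQ_lt_tol_wrt (linf_norm :: 'a \<times> 'b \<Rightarrow> real) \<kappa> \<epsilon>"
proof
  assume sq: "SQ_lt_tol_wrt (linf_norm :: 'a \<times> 'b \<Rightarrow> real) \<kappa> \<epsilon>"
  obtain A1 :: "'a set" where A1: "A1 \<subseteq> {x. norm x = 1}" "(card_of A1, \<kappa>) \<in> ordLess"
    and bad1: "\<And>y. norm y = 1 \<Longrightarrow> \<exists>x\<in>A1. \<not> (norm (x + y) \<le> 1 + \<epsilon> \<and> norm (x - y) \<le> 1 + \<epsilon>)"
    using not_X unfolding SQ_lt_tol_wrt_def by blast
  obtain A2 :: "'b set" where A2: "A2 \<subseteq> {x. norm x = 1}" "(card_of A2, \<kappa>) \<in> ordLess"
    and bad2: "\<And>y. norm y = 1 \<Longrightarrow> \<exists>x\<in>A2. \<not> (norm (x + y) \<le> 1 + \<epsilon> \<and> norm (x - y) \<le> 1 + \<epsilon>)"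
    using not_Y unfolding SQ_lt_tol_wrt_def by blast
  define A where "A = (\<lambda>a. (a, 0::'b)) ` A1 \<union> (\<lambda>b. (0::'a, b)) ` A2"
  have "A \<subseteq> {x. linf_norm x = 1}"
    using A1 A2 by (auto simp: A_def linf_norm_def)
  moreover have "(card_of A, \<kappa>) \<in> ordLess"
    unfolding A_def using A1(2) A2(2)
    by (intro card_of_Un_ordLess_infinite_Field \<kappa> card_of_image_ordLess)
  ultimately obtain y :: "'a \<times> 'b" where y: "linf_norm y = 1"
      "\<forall>x\<in>A. linf_norm (x + y) \<le> 1 + \<epsilon> \<and> linf_norm (x - y) \<le> 1 + \<epsilon>"
    using sq unfolding SQ_lt_tol_wrt_def by blast
  consider "norm (fst y) = 1" | "norm (snd y) = 1"
    using y(1) unfolding linf_norm_def by linarith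
  then show False
  proof cases
    case 1
    then obtain a where "a \<in> A1" "\<not> (norm (a + fst y) \<le> 1 + \<epsilon> \<and> norm (a - fst y) \<le> 1 + \<epsilon>)"
      using bad1 by blast
    moreover from \<open>a \<in> A1\<close> have "(a, 0) \<in> A"
      by (simp add: A_def)
    ultimately show False
      using y(2) by (fastforce simp: linf_norm_def)
  next
    case 2
    then obtain b where "b \<in> A2" "\<not> (norm (b + snd y) \<le> 1 + \<epsilon> \<and> norm (b - snd y) \<le> 1 + \<epsilon>)"
      using bad2 by blast
    moreover from \<open>b \<in> A2\<close> have "(0, b) \<in> A"
      by (simp add: A_def)
    ultimately show False
      using y(2) by (fastforce simp: linf_norm_def)
  qed
qed

lemma not_ASQ_lt_wrt_linf:
  fixes \<kappa> :: "'c rel"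
  assumes \<kappa>: "Card_order \<kappa>" "\<not> finite (Field \<kappa>)"
    and "\<not> ASQ_lt_wrt (norm :: 'a::real_normed_vector \<Rightarrow> real) \<kappa>"
    and "\<not> ASQ_lt_wrt (norm :: 'b::real_normed_vector \<Rightarrow> real) \<kappa>"
  shows "\<not> ASQ_lt_wrt (linf_norm :: 'a \<times> 'b \<Rightarrow> real) \<kappa>"
proof -
  obtain \<epsilon>1 \<epsilon>2 where "\<epsilon>1 > 0" "\<not> SQ_lt_tol_wrt (norm :: 'a \<Rightarrow> real) \<kappa> \<epsilon>1"
      "\<epsilon>2 > 0" "\<not> SQ_lt_tol_wrt (norm :: 'b \<Rightarrow> real) \<kappa> \<epsilon>2"
    using assms(3,4) unfolding ASQ_lt_wrt_iff_tol by blast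
  then have "\<not> SQ_lt_tol_wrt (norm :: 'a \<Rightarrow> real) \<kappa> (min \<epsilon>1 \<epsilon>2)"
      "\<not> SQ_lt_tol_wrt (norm :: 'b \<Rightarrow> real) \<kappa> (min \<epsilon>1 \<epsilon>2)"
    by (metis SQ_lt_tol_wrt_mono min.cobounded1, metis SQ_lt_tol_wrt_mono min.cobounded2)
  then have "\<not> SQ_lt_tol_wrt (linf_norm :: 'a \<times> 'b \<Rightarrow> real) \<kappa> (min \<epsilon>1 \<epsilon>2)"
    by (rule not_SQ_lt_tol_linf[OF \<kappa>])
  moreover have "min \<epsilon>1 \<epsilon>2 > 0"
    using \<open>\<epsilon>1 > 0\<close> \<open>\<epsilon>2 > 0\<close> by simp
  ultimately show ?thesis
    unfolding ASQ_lt_wrt_iff_tol by blast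
qed

theorem corollary4p2:
  fixes \<kappa> :: "'c rel"
  assumes "Card_order \<kappa>" and "\<not> finite (Field \<kappa>)"
  shows "(ASQ_lt_wrt (linf_norm :: 'a::banach \<times> 'b::banach \<Rightarrow> real) \<kappa>
            \<longleftrightarrow> ASQ_lt \<kappa> TYPE('a) \<or> ASQ_lt \<kappa> TYPE('b))
       \<and> (SQ_lt_wrt (linf_norm :: 'a \<times> 'b \<Rightarrow> real) \<kappa>
            \<longleftrightarrow> SQ_lt \<kappa> TYPE('a) \<or> SQ_lt \<kappa> TYPE('b))"
proof (intro conjI iffI)
  show "ASQ_lt \<kappa> TYPE('a) \<or> ASQ_lt \<kappa> TYPE('b)"
    if "ASQ_lt_wrt (linf_norm :: 'a \<times> 'b \<Rightarrow> real) \<kappa>"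
    using that not_ASQ_lt_wrt_linf[OF assms] by blast
  show "ASQ_lt_wrt (linf_norm :: 'a \<times> 'b \<Rightarrow> real) \<kappa>"
    if "ASQ_lt \<kappa> TYPE('a) \<or> ASQ_lt \<kappa> TYPE('b)"
    using that unfolding ASQ_lt_wrt_iff_tol
    by (meson less_imp_le SQ_lt_tol_linf_fst SQ_lt_tol_linf_snd)
  show "SQ_lt \<kappa> TYPE('a) \<or> SQ_lt \<kappa> TYPE('b)"
    if "SQ_lt_wrt (linf_norm :: 'a \<times> 'b \<Rightarrow> real) \<kappa>"
    using that unfolding SQ_lt_wrt_iff_tol by (meson not_SQ_lt_tol_linf[OF assms])
  show "SQ_lt_wrt (linf_norm :: 'a \<times> 'b \<Rightarrow> real) \<kappa>"
    if "SQ_lt \<kappa> TYPE('a) \<or> SQ_lt \<kappa> TYPE('b)"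
    using that unfolding SQ_lt_wrt_iff_tol by (meson order_refl SQ_lt_tol_linf_fst SQ_lt_tol_linf_snd)
qed

end
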